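(* Let $d\ge1$, $\emptyset\ne H\subset\mathbb{R}^d$, $r>0$, and let $\tilde x,\tilde y\in\mathbb{R}^d$ with $d(\tilde x,H)\ge r$ and $d(\tilde y,H)\ge r$. Let $\tilde f(s):=d(T_s\tilde x,T_s\tilde y)$ for $s\ge0$. Then $\tilde f$ is (right-)differentiable at $0$ and $$-\dot{\tilde f}(0)\le\frac{\tilde f(0)}{r}.$$
   Context: $d(\cdot,\cdot)$ is Euclidean distance and $d(x,H)=\inf_{y\in H}|x-y|$. Let $\bar H$ be the closure of $H$; for each $x$ let $\pi(x)\in\bar H$ be a point with $|x-\pi(x)|=d(x,H)$ (any one if several). For $s\ge0$, $T_s x:=x+s\frac{\pi(x)-x}{|\pi(x)-x|}$ if $d(x,H)>s$ and $T_s x:=\pi(x)$ if $d(x,H)\le s$. The derivative at $0$ is one-sided since $\tilde f$ is defined on $[0,\infty)$. *)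

theory Defs
  imports "HOL-Analysis.Analysis"
begin

text \<open>The map T_s, relative to a chosen nearest-point selection p (the paper's pi) for the set H.\<close>
definition Tmap :: "'a::real_normed_vector set \<Rightarrow> ('a \<Rightarrow> 'a) \<Rightarrow> real \<Rightarrow> 'a \<Rightarrow> 'a" where
  "Tmap H p s x =
     (if infdist x H > s then x + (s / norm (p x - x)) *\<^sub>R (p x - x) else p x)"

end

theory Submission
  imports Defs
begin

text \<open>
  For \<open>0 \<le> s < r\<close> both points move with unit speed along the fixed directions
  \<open>u\<^sub>x = (\<pi> x - x)/d(x,H)\<close> and \<open>u\<^sub>y\<close>, so \<open>f(s) = |a + s b|\<close> with \<open>a = x - y\<close> and
  \<open>b = u\<^sub>x - u\<^sub>y\<close>, whose right derivative at \<open>0\<close> is \<open>\<langle>a, b\<rangle>/|a|\<close>.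
  Since \<open>\<pi> y \<in> closure H\<close> lies at distance at least \<open>d(x,H)\<close> from \<open>x\<close> and vice versa,
  expanding \<open>|x - \<pi> y|\<^sup>2 \<ge> d(x,H)\<^sup>2\<close> and \<open>|y - \<pi> x|\<^sup>2 \<ge> d(y,H)\<^sup>2\<close> bounds
  \<open>-\<langle>a, b\<rangle>\<close> by \<open>|a|\<^sup>2 (1/(2d(x,H)) + 1/(2d(y,H))) \<le> |a|\<^sup>2/r\<close>.
\<close>

lemma neg_inner_diff_unit_directions_le:
  fixes a vx vy :: "'a::real_inner"
  assumes "r > 0" "norm vx \<ge> r" "norm vy \<ge> r"
    and "norm (a - vy) \<ge> norm vx" "norm (a + vx) \<ge> norm vy"
  shows "- (a \<bullet> (sgn vx - sgn vy)) \<le> (norm a)\<^sup>2 / r"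
proof -
  define dx dy A P Q where "dx = norm vx" and "dy = norm vy" and "A = (norm a)\<^sup>2"
    and "P = a \<bullet> vx" and "Q = a \<bullet> vy"
  note defs = dx_def dy_def A_def P_def Q_def
  have dx: "dx > 0" "dx \<ge> r" and dy: "dy > 0" "dy \<ge> r"
    using assms(1-3) by (auto simp: defs)
  have "(norm (a - vy))\<^sup>2 = A - 2 * Q + dy\<^sup>2" "(norm (a + vx))\<^sup>2 = A + 2 * P + dx\<^sup>2"
    by (simp_all add: defs power2_norm_eq_inner algebra_simps inner_commute)
  moreover have "(norm (a - vy))\<^sup>2 \<ge> dx\<^sup>2" "(norm (a + vx))\<^sup>2 \<ge> dy\<^sup>2"
    using assms(4,5) dx dy by (simp_all add: defs power_mono)
  ultimately have Q: "2 * Q \<le> A + dy\<^sup>2 - dx\<^sup>2" and P: "- 2 * P \<le> A + dx\<^sup>2 - dy\<^sup>2"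
    by linarith+
  have "- (a \<bullet> (sgn vx - sgn vy)) = - P / dx + Q / dy"
    by (simp add: defs sgn_div_norm inner_diff_right divide_inverse mult.commute)
  also have "\<dots> \<le> (A + dx\<^sup>2 - dy\<^sup>2) / (2 * dx) + (A + dy\<^sup>2 - dx\<^sup>2) / (2 * dy)"
    using P Q dx dy by (intro add_mono) (simp_all add: divide_simps)
  also have "\<dots> = A * (1 / (2 * dx) + 1 / (2 * dy)) - (dx - dy)\<^sup>2 * (dx + dy) / (2 * dx * dy)"
    using dx dy by (simp add: field_simps power2_eq_square)
  also have "\<dots> \<le> A * (1 / r)"
  proof -
    have "1 / dx \<le> 1 / r" "1 / dy \<le> 1 / r"
      using assms(1) dx dy by (simp_all add: frac_le)
    then have "A * (1 / (2 * dx) + 1 / (2 * dy)) \<le> A * (1 / r)"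
      by (intro mult_left_mono) (simp_all add: defs)
    moreover have "(dx - dy)\<^sup>2 * (dx + dy) / (2 * dx * dy) \<ge> 0"
      using dx dy by simp
    ultimately show ?thesis by linarith
  qed
  finally show ?thesis by (simp add: defs)
qed

lemma has_real_derivative_norm_affine:
  fixes a b :: "'a::real_inner"
  assumes "a \<noteq> 0"
  shows "((\<lambda>s. norm (a + s *\<^sub>R b)) has_real_derivative (sgn a \<bullet> b)) (at 0 within S)"
proof -
  have "((\<lambda>s. norm (a + s *\<^sub>R b)) has_derivative (\<lambda>h. (h *\<^sub>R b) \<bullet> sgn a)) (at 0 within S)"
  proof -
    have "((\<lambda>s. a + s *\<^sub>R b) has_derivative (\<lambda>h. h *\<^sub>R b)) (at 0 within S)"
      by (auto intro!: derivative_eq_intros)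
    moreover have "(norm has_derivative (\<lambda>h. h \<bullet> sgn a)) (at (a + 0 *\<^sub>R b))"
      using has_derivative_norm[OF assms] by simp
    ultimately show ?thesis
      using has_derivative_compose by (fastforce simp: inner_commute)
  qed
  moreover have "(\<lambda>h. (h *\<^sub>R b) \<bullet> sgn a) = (*) (sgn a \<bullet> b)"
    by (auto simp: inner_commute)
  ultimately show ?thesis
    unfolding has_field_derivative_def by simp
qed

lemma infdist_le_dist_closure:
  assumes "A \<noteq> {}" "q \<in> closure A"
  shows "infdist z A \<le> dist z q"
  using infdist_triangle[of z A q] in_closure_iff_infdist_zero[OF assms(1)] assms(2) by simp

lemma Tmap_before_projection:
  assumes "0 \<le> s" "s < infdist x H" "norm (p x - x) = infdist x H"
  shows "Tmap H p s x = x + s *\<^sub>R sgn (p x - x)"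
  using assms by (simp add: Tmap_def sgn_div_norm divide_inverse mult.commute)

theorem lemma4:
  fixes H :: "(real ^ 'n) set" and p :: "real ^ 'n \<Rightarrow> real ^ 'n"
    and r :: real and x y :: "real ^ 'n"
  assumes "H \<noteq> {}"
    and "\<And>z. p z \<in> closure H \<and> dist z (p z) = infdist z H"
    and "r > 0"
    and "infdist x H \<ge> r" and "infdist y H \<ge> r"
  shows "\<exists>D. ((\<lambda>s. dist (Tmap H p s x) (Tmap H p s y)) has_real_derivative D) (at 0 within {0..})
            \<and> - D \<le> dist (Tmap H p 0 x) (Tmap H p 0 y) / r"
proof -
  define a b where "a = x - y" and "b = sgn (p x - x) - sgn (p y - y)"
  note a_b_def = a_def b_def
  have norm_proj: "norm (p z - z) = infdist z H" "norm (z - p z) = infdist z H" for z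
    using assms(2)[of z] by (simp_all add: dist_norm norm_minus_commute)
  have f: "dist (Tmap H p s x) (Tmap H p s y) = norm (a + s *\<^sub>R b)"
    if "s \<in> {0..}" "dist s 0 < r" for s
    using that assms(4,5) norm_proj
    by (simp add: Tmap_before_projection a_b_def dist_norm dist_real_def algebra_simps)
  show ?thesis
  proof (cases "a = 0")
    case True
    then show ?thesis by (intro exI[of _ 0]) (simp add: a_b_def)
  next
    case False
    have key: "- (a \<bullet> b) \<le> (norm a)\<^sup>2 / r"
      unfolding a_b_def
      using infdist_le_dist_closure[OF assms(1) conjunct1[OF assms(2)], of x y]
        infdist_le_dist_closure[OF assms(1) conjunct1[OF assms(2)], of y x]
      by (intro neg_inner_diff_unit_directions_le)
        (simp_all add: assms norm_proj dist_norm algebra_simps norm_minus_commute[of "p x" y])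
    have "- (a \<bullet> b) / norm a \<le> (norm a)\<^sup>2 / r / norm a"
      using divide_right_mono[OF key, of "norm a"] by simp
    moreover have "- (sgn a \<bullet> b) = - (a \<bullet> b) / norm a"
      by (simp add: sgn_div_norm divide_inverse mult.commute)
    ultimately have "- (sgn a \<bullet> b) \<le> (norm a)\<^sup>2 / r / norm a"
      by simp
    also have "\<dots> = norm a / r"
      using False by (simp add: power2_eq_square)
    finally have "- (sgn a \<bullet> b) \<le> norm a / r" .
    moreover have "((\<lambda>s. dist (Tmap H p s x) (Tmap H p s y)) has_real_derivative (sgn a \<bullet> b))
        (at 0 within {0..})"
      by (rule has_field_derivative_transform_within[OF has_real_derivative_norm_affine[OF False] assms(3)])
        (auto simp: f)
    ultimately show ?thesis
      using f[of 0] assms(3) by auto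
  qed
qed

end
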